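(* For all non-negative integers $n$, $p$ and $m$, $$\sum_{k=0}^n\frac{1}{2^{2k}}\binom{2(k+p)}{k+p}\binom{k+p}{k}H_{n-k}(m)\left(O_{k+p}-O_p\right)=\frac12\sum_{k=0}^n\frac{1}{2^{2k}}\binom{2(k+p)}{k+p}\binom{k+p}{k}H_{n-k}(m+1).$$ In particular, $$\sum_{k=0}^n\frac{1}{2^{2k}}\binom{2(k+p)}{k+p}\binom{k+p}{k}H_{n-k}=\frac{1}{2^{2n}}\,\frac{p+1}{2p+1}\binom{2(n+p+1)}{n+p+1}\binom{n+p+1}{n}\left(O_{n+p+1}-O_{p+1}\right).$$
   Context: For integers $m\ge 1$, $n\ge 0$, the multiple harmonic-like numbers are $H_n(m)=\sum_{1\le k_1+k_2+\cdots+k_m\le n}\frac{1}{k_1k_2\cdots k_m}$ (sum over positive integers $k_1,\dots,k_m$), with $H_n(0)=1$ for $n\ge 0$ and $H_0(m)=0$ for $m\ge1$. $H_n=\sum_{k=1}^n\frac1k$. The odd harmonic numbers are $O_n=\sum_{k=1}^n\frac{1}{2k-1}$, $O_0=0$. *)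

theory Defs
  imports "HOL-Analysis.Analysis"
begin

definition mhn :: "nat \<Rightarrow> nat \<Rightarrow> real" where
  "mhn n m = (if m = 0 then 1 else
     (\<Sum>k\<in>{k \<in> {0..<m} \<rightarrow>\<^sub>E {1..n}. 1 \<le> (\<Sum>i<m. k i) \<and> (\<Sum>i<m. k i) \<le> n}.
        1 / (\<Prod>i<m. real (k i))))"

definition harmonic :: "nat \<Rightarrow> real" where
  "harmonic n = (\<Sum>k=1..n. 1 / real k)"

definition oddharm :: "nat \<Rightarrow> real" where
  "oddharm n = (\<Sum>k=1..n. 1 / (2 * real k - 1))"

end

theory Submission
  imports Defs
begin

text \<open>Write \<open>w\<^sub>k\<close> for the weight of the \<open>k\<close>-th summand and \<open>s = p + 1/2\<close>. The weights satisfy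
  \<open>(k+1) w\<^sub>k\<^sub>+\<^sub>1 = (k+s) w\<^sub>k\<close>, and this recurrence alone forces
  \<open>\<Sum>\<^sub>k\<^sub><\<^sub>l w\<^sub>k/(l-k) = w\<^sub>l \<Sum>\<^sub>i\<^sub><\<^sub>l 1/(i+s) = 2 w\<^sub>l (O\<^sub>l\<^sub>+\<^sub>p - O\<^sub>p)\<close>: multiplied by \<open>l\<close>, both sides
  obey the same first-order recurrence. Splitting off the last variable gives
  \<open>H\<^sub>n(m+1) = \<Sum>\<^sub>j H\<^sub>n\<^sub>-\<^sub>j(m)/j\<close>, so after exchanging the order of summation the first identity
  is exactly this evaluation. The second one is the case \<open>m = 0\<close>, where
  \<open>\<Sum>\<^sub>l w\<^sub>l \<Sum>\<^sub>i\<^sub><\<^sub>l 1/(i+s)\<close> telescopes, again by the recurrence.\<close>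

definition mhn_tuples :: "nat \<Rightarrow> nat \<Rightarrow> (nat \<Rightarrow> nat) set" where
  "mhn_tuples n m = {k \<in> {0..<m} \<rightarrow>\<^sub>E {1..n}. (\<Sum>i<m. k i) \<le> n}"

lemma finite_mhn_tuples: "finite (mhn_tuples n m)"
  unfolding mhn_tuples_def by (rule finite_subset[of _ "{0..<m} \<rightarrow>\<^sub>E {1..n}"]) (auto intro: finite_PiE)

text \<open>For \<open>m > 0\<close> the condition \<open>1 \<le> k\<^sub>1 + \<dots> + k\<^sub>m\<close> in \<open>mhn\<close> is automatic; for \<open>m = 0\<close> the
  only tuple is the empty one, which accounts for \<open>H\<^sub>n(0) = 1\<close>.\<close>
lemma mhn_eq_sum_mhn_tuples: "mhn n m = (\<Sum>k\<in>mhn_tuples n m. 1 / (\<Prod>i<m. real (k i)))"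
proof (cases "m = 0")
  case True
  then show ?thesis by (simp add: mhn_def mhn_tuples_def)
next
  case False
  have "1 \<le> (\<Sum>i<m. k i)" if "k \<in> {0..<m} \<rightarrow>\<^sub>E {1..n}" for k
  proof -
    have "k 0 \<le> (\<Sum>i<m. k i)"
      by (rule member_le_sum) (use False in auto)
    moreover have "1 \<le> k 0"
      using that False by (auto simp: PiE_def Pi_def)
    ultimately show ?thesis by simp
  qed
  then have "{k \<in> {0..<m} \<rightarrow>\<^sub>E {1..n}. 1 \<le> (\<Sum>i<m. k i) \<and> (\<Sum>i<m. k i) \<le> n} = mhn_tuples n m"
    unfolding mhn_tuples_def by blast
  then show ?thesis
    using False by (simp add: mhn_def)
qed

lemma mhn_tuples_Suc:
  "mhn_tuples n (Suc m) = (\<lambda>(j, k). k(m := j)) ` (SIGMA j:{1..n}. mhn_tuples (n - j) m)"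
proof (intro equalityI subsetI)
  fix k' assume k': "k' \<in> mhn_tuples n (Suc m)"
  define j where "j = k' m"
  define k where "k = k'(m := undefined)"
  have sum_k': "(\<Sum>i<Suc m. k' i) = j + (\<Sum>i<m. k i)"
    by (simp add: j_def k_def)
  have "(\<Sum>i<m. k i) \<le> n - j"
    using k' sum_k' unfolding mhn_tuples_def by (simp del: sum.lessThan_Suc) arith
  moreover have "j \<in> {1..n}"
    using k' by (auto simp: mhn_tuples_def j_def PiE_def Pi_def)
  moreover have "k \<in> {0..<m} \<rightarrow>\<^sub>E {1..n - j}"
  proof -
    have "k i \<le> (\<Sum>i<m. k i)" if "i < m" for i
      by (rule member_le_sum) (use that in auto)
    then show ?thesis
      using k' \<open>(\<Sum>i<m. k i) \<le> n - j\<close>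
      by (auto simp: mhn_tuples_def PiE_def Pi_def extensional_def k_def) (meson le_trans lessI less_trans)
  qed
  ultimately have "(j, k) \<in> (SIGMA j:{1..n}. mhn_tuples (n - j) m)"
    by (auto simp: mhn_tuples_def)
  moreover have "k' = k(m := j)"
    by (auto simp: k_def j_def)
  ultimately show "k' \<in> (\<lambda>(j, k). k(m := j)) ` (SIGMA j:{1..n}. mhn_tuples (n - j) m)"
    by force
next
  fix x assume "x \<in> (\<lambda>(j, k). k(m := j)) ` (SIGMA j:{1..n}. mhn_tuples (n - j) m)"
  then obtain j k where x: "x = k(m := j)" and j: "j \<in> {1..n}" and k: "k \<in> mhn_tuples (n - j) m"
    by auto
  have "(\<Sum>i<Suc m. x i) = j + (\<Sum>i<m. k i)"
    by (simp add: x)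
  then show "x \<in> mhn_tuples n (Suc m)"
    using j k by (auto simp: mhn_tuples_def x PiE_def Pi_def extensional_def)
                 (metis less_SucE diff_le_self le_trans)
qed

lemma mhn_Suc: "mhn n (Suc m) = (\<Sum>j=1..n. mhn (n - j) m / real j)"
proof -
  let ?ext = "\<lambda>(j, k). k(m := j)"
  have inj: "inj_on ?ext (SIGMA j:{1..n}. mhn_tuples (n - j) m)"
  proof (rule inj_onI, clarsimp)
    fix j k j' k'
    assume "k \<in> mhn_tuples (n - j) m" "k' \<in> mhn_tuples (n - j') m" "k(m := j) = k'(m := j')"
    then show "j = j' \<and> k = k'"
      by (auto simp: mhn_tuples_def PiE_def extensional_def fun_eq_iff)
         (metis fun_upd_same, metis fun_upd_other lessThan_iff less_irrefl)
  qed
  have "mhn n (Suc m)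
      = (\<Sum>(j, k)\<in>(SIGMA j:{1..n}. mhn_tuples (n - j) m). 1 / (\<Prod>i<Suc m. real ((k(m := j)) i)))"
    unfolding mhn_eq_sum_mhn_tuples mhn_tuples_Suc
    by (subst sum.reindex[OF inj]) (simp add: case_prod_unfold)
  also have "\<dots> = (\<Sum>(j, k)\<in>(SIGMA j:{1..n}. mhn_tuples (n - j) m). 1 / (\<Prod>i<m. real (k i)) / real j)"
    by (intro sum.cong refl) (auto simp: case_prod_unfold)
  also have "\<dots> = (\<Sum>j=1..n. mhn (n - j) m / real j)"
    by (subst sum.Sigma[symmetric]) (auto simp: finite_mhn_tuples mhn_eq_sum_mhn_tuples sum_divide_distrib)
  finally show ?thesis .
qed

lemma mhn_0: "mhn n 0 = 1"
  by (simp add: mhn_def)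

lemma harmonic_eq_mhn_1: "harmonic n = mhn n 1"
  using mhn_Suc[of n 0] by (simp add: harmonic_def mhn_0)

lemma sum_reciprocal_convolution_swap:
  fixes a g :: "nat \<Rightarrow> real"
  shows "(\<Sum>k=0..n. a k * (\<Sum>j=1..n-k. g (n-k-j) / real j))
       = (\<Sum>l=0..n. g (n-l) * (\<Sum>k<l. a k / real (l-k)))"
proof -
  have shift: "(\<Sum>j=1..n-k. g (n-k-j) / real j) = (\<Sum>l=Suc k..n. g (n-l) / real (l-k))" for k
  proof (cases "k \<le> n")
    case True
    then have "{Suc k..n} = {1+k..(n-k)+k}" by simp
    then show ?thesis
      using sum.shift_bounds_cl_nat_ivl[of "\<lambda>l. g (n-l) / real (l-k)" 1 k "n-k"]
      using True by (simp add: add.commute)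
  qed simp
  have "(\<Sum>k=0..n. a k * (\<Sum>j=1..n-k. g (n-k-j) / real j))
      = (\<Sum>k=0..<n. \<Sum>l=Suc k..n. a k * (g (n-l) / real (l-k)))"
    unfolding shift sum_distrib_left
    by (simp only: mult.assoc flip: atLeastLessThanSuc_atLeastAtMost) (simp add: sum.atLeastLessThan_Suc)
  also have "\<dots> = (\<Sum>l=0..n. \<Sum>k=0..<l. a k * (g (n-l) / real (l-k)))"
    by (rule sum.nested_swap[symmetric])
  finally show ?thesis
    by (simp add: sum_distrib_left atLeast0LessThan mult_ac)
qed

context
  fixes a :: "nat \<Rightarrow> real" and s :: real
  assumes rec: "\<And>k. real (Suc k) * a (Suc k) = (real k + s) * a k"
begin

lemma sum_reciprocal_convolution_Suc:
  shows "real (Suc l) * (\<Sum>k<Suc l. a k / real (Suc l - k))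
       = (real l + s) * (\<Sum>k<l. a k / real (l - k)) + a l"
proof -
  have "real (Suc l) * (\<Sum>k<Suc l. a k / real (Suc l - k))
      = (\<Sum>k<Suc l. a k) + (\<Sum>k<Suc l. real k * a k / real (Suc l - k))"
    unfolding sum_distrib_left sum.distrib[symmetric]
    by (intro sum.cong refl) (auto simp: field_simps)
  also have "(\<Sum>k<Suc l. real k * a k / real (Suc l - k))
           = (\<Sum>k<l. real (Suc k) * a (Suc k) / real (l - k))"
    by (subst sum.lessThan_Suc_shift) simp
  also have "\<dots> = (\<Sum>k<l. (real l + s) * a k / real (l - k)) - (\<Sum>k<l. a k)"
    unfolding rec sum_subtractf[symmetric]
    by (intro sum.cong refl) (auto simp: field_simps)
  finally show ?thesis
    by (simp add: sum_distrib_left)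
qed

lemma sum_reciprocal_convolution_rising:
  assumes "s > 0"
  shows "(\<Sum>k<l. a k / real (l - k)) = a l * (\<Sum>i<l. 1 / (real i + s))"
proof (induction l)
  case (Suc l)
  define S where "S = (\<Sum>i<l. 1 / (real i + s))"
  have "real l + s > 0"
    using \<open>s > 0\<close> by simp
  have "real (Suc l) * (\<Sum>k<Suc l. a k / real (Suc l - k)) = (real l + s) * (a l * S) + a l"
    by (simp only: sum_reciprocal_convolution_Suc Suc.IH S_def)
  also have "\<dots> = (real l + s) * a l * (S + 1 / (real l + s))"
    using \<open>real l + s > 0\<close> by (simp add: field_simps)
  also have "\<dots> = real (Suc l) * (a (Suc l) * (\<Sum>i<Suc l. 1 / (real i + s)))"
    by (simp add: rec S_def del: of_nat_Suc)
  finally show ?case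
    by (simp del: of_nat_Suc)
qed simp

lemma sum_rising_times_harmonic:
  assumes "s > 0"
  shows "(\<Sum>l=0..n. a l * (\<Sum>i<l. 1 / (real i + s)))
       = real (Suc n) / s * a (Suc n) * (\<Sum>i=1..n. 1 / (real i + s))"
proof (induction n)
  case (Suc n)
  define S where "S = (\<Sum>i=1..n. 1 / (real i + s))"
  have "real (Suc n) + s > 0"
    using \<open>s > 0\<close> by (simp add: add_pos_pos)
  have "(\<Sum>i<Suc n. 1 / (real i + s)) = 1 / s + S"
    unfolding S_def by (simp only: One_nat_def sum.atLeast1_atMost_eq sum.lessThan_Suc_shift) simp
  then have "(\<Sum>l=0..Suc n. a l * (\<Sum>i<l. 1 / (real i + s)))
      = real (Suc n) / s * a (Suc n) * S + a (Suc n) * (1 / s + S)"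
    using Suc.IH by (simp add: S_def)
  also have "\<dots> = ((real (Suc n) + s) * a (Suc n) * S + a (Suc n)) / s"
    using \<open>s > 0\<close> by (simp add: field_simps)
  also have "\<dots> = (real (Suc n) + s) * a (Suc n) * (S + 1 / (real (Suc n) + s)) / s"
    using \<open>real (Suc n) + s > 0\<close> by (simp add: distrib_left)
  also have "\<dots> = real (Suc (Suc n)) / s * a (Suc (Suc n)) * (\<Sum>i=1..Suc n. 1 / (real i + s))"
    by (simp only: rec[symmetric]) (simp add: S_def)
  finally show ?case .
qed simp

end

lemma oddharm_Suc: "oddharm (Suc n) = oddharm n + 1 / (2 * real n + 1)"
  by (simp add: oddharm_def)

lemma oddharm_add_diff: "oddharm (l + p) - oddharm p = (\<Sum>i<l. 1 / (2 * real (i + p) + 1))"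
  by (induction l) (simp_all add: oddharm_Suc del: of_nat_add)

lemma sum_reciprocal_half_eq_oddharm:
  "(\<Sum>i<l. 1 / (real i + (real p + 1/2))) = 2 * (oddharm (l + p) - oddharm p)"
  unfolding oddharm_add_diff sum_distrib_left by (intro sum.cong) (simp_all add: field_simps)

definition weight :: "nat \<Rightarrow> nat \<Rightarrow> real" where
  "weight p k = 1 / 2 ^ (2*k) * real ((2*(k+p)) choose (k+p)) * real ((k+p) choose k)"

lemma weight_fact:
  "weight p k = fact (2*(k+p)) / (4 ^ k * fact (k+p) * fact k * fact p)"
proof -
  have "(2::real) ^ (2*k) = 4 ^ k"
    by (simp add: power_mult)
  then show ?thesis
    unfolding weight_def by (simp add: binomial_fact mult_2 field_simps)
qed

lemma fact_double_Suc: "fact (2 * Suc q) = (2 * real q + 2) * (2 * real q + 1) * (fact (2 * q) :: real)"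
proof -
  have "2 * Suc q = Suc (Suc (2 * q))" by simp
  then show ?thesis by (simp only: fact_Suc) (simp add: algebra_simps)
qed

lemma weight_Suc: "real (Suc k) * weight p (Suc k) = (real k + (real p + 1/2)) * weight p k"
proof -
  have "fact (2 * (Suc k + p)) = (2 * real (k+p) + 2) * (2 * real (k+p) + 1) * (fact (2 * (k+p)) :: real)"
    using fact_double_Suc[of "k+p"] by simp
  moreover have "fact (Suc k + p) = (real (k+p) + 1) * (fact (k + p) :: real)"
    by simp
  ultimately show ?thesis
    unfolding weight_fact by (simp add: divide_simps) (simp add: algebra_simps)
qed

lemma weight_Suc_left: "real (Suc p) * weight (Suc p) n = 4 * real (Suc n) * weight p (Suc n)"
proof -
  have "n + Suc p = Suc n + p" by simp
  then show ?thesis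
    unfolding weight_fact by (simp add: divide_simps del: add_Suc_right add_Suc) (simp add: algebra_simps)
qed

lemma sum_weight_reciprocal:
  "(\<Sum>k<l. weight p k / real (l - k)) = 2 * weight p l * (oddharm (l + p) - oddharm p)"
proof -
  have "(\<Sum>k<l. weight p k / real (l - k)) = weight p l * (\<Sum>i<l. 1 / (real i + (real p + 1/2)))"
    by (rule sum_reciprocal_convolution_rising[OF weight_Suc]) simp
  then show ?thesis
    by (simp add: sum_reciprocal_half_eq_oddharm)
qed

lemma sum_weight_mhn_Suc:
  "(\<Sum>k=0..n. weight p k * mhn (n-k) (Suc m))
   = 2 * (\<Sum>k=0..n. weight p k * mhn (n-k) m * (oddharm (k + p) - oddharm p))"
proof -
  have "(\<Sum>k=0..n. weight p k * mhn (n-k) (Suc m))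
      = (\<Sum>k=0..n. weight p k * (\<Sum>j=1..n-k. mhn (n-k-j) m / real j))"
    by (simp add: mhn_Suc)
  also have "\<dots> = (\<Sum>l=0..n. mhn (n-l) m * (\<Sum>k<l. weight p k / real (l-k)))"
    by (rule sum_reciprocal_convolution_swap)
  also have "\<dots> = (\<Sum>l=0..n. mhn (n-l) m * (2 * weight p l * (oddharm (l + p) - oddharm p)))"
    by (simp only: sum_weight_reciprocal)
  finally show ?thesis
    by (simp add: sum_distrib_left mult_ac)
qed

lemma sum_weight_oddharm:
  "2 * (\<Sum>k=0..n. weight p k * (oddharm (k + p) - oddharm p))
   = real (Suc p) / real (2*p + 1) * weight (Suc p) n * (oddharm (n + p + 1) - oddharm (p + 1))"
proof -
  have "(\<Sum>i=1..n. 1 / (real i + (real p + 1/2))) = 2 * (oddharm (n + Suc p) - oddharm (Suc p))"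
  proof -
    have "(\<Sum>i=1..n. 1 / (real i + (real p + 1/2))) = (\<Sum>i<n. 1 / (real i + (real (Suc p) + 1/2)))"
      by (simp only: One_nat_def sum.atLeast1_atMost_eq) (simp add: algebra_simps)
    then show ?thesis
      by (simp only: sum_reciprocal_half_eq_oddharm)
  qed
  moreover have "2 * (\<Sum>k=0..n. weight p k * (oddharm (k + p) - oddharm p))
      = (\<Sum>k=0..n. weight p k * (\<Sum>i<k. 1 / (real i + (real p + 1/2))))"
    by (simp only: sum_reciprocal_half_eq_oddharm sum_distrib_left mult.left_commute)
  moreover have "(\<Sum>k=0..n. weight p k * (\<Sum>i<k. 1 / (real i + (real p + 1/2))))
      = real (Suc n) / (real p + 1/2) * weight p (Suc n) * (\<Sum>i=1..n. 1 / (real i + (real p + 1/2)))"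
    by (rule sum_rising_times_harmonic[OF weight_Suc]) simp
  ultimately have "2 * (\<Sum>k=0..n. weight p k * (oddharm (k + p) - oddharm p))
      = real (Suc n) / (real p + 1/2) * weight p (Suc n) * (2 * (oddharm (n + Suc p) - oddharm (Suc p)))"
    by simp
  also have "\<dots> = 4 * real (Suc n) * weight p (Suc n) / real (2*p + 1) * (oddharm (n + p + 1) - oddharm (p + 1))"
    by (simp add: field_simps)
  also have "\<dots> = real (Suc p) / real (2*p + 1) * weight (Suc p) n * (oddharm (n + p + 1) - oddharm (p + 1))"
    by (simp only: weight_Suc_left[symmetric]) simp
  finally show ?thesis .
qed

theorem theorem13:
  fixes n p m :: nat
  shows "((\<Sum>k=0..n. 1 / 2 ^ (2*k) * real ((2*(k+p)) choose (k+p)) * real ((k+p) choose k)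
            * mhn (n-k) m * (oddharm (k+p) - oddharm p))
         = 1/2 * (\<Sum>k=0..n. 1 / 2 ^ (2*k) * real ((2*(k+p)) choose (k+p)) * real ((k+p) choose k)
            * mhn (n-k) (m+1))) \<and>
         ((\<Sum>k=0..n. 1 / 2 ^ (2*k) * real ((2*(k+p)) choose (k+p)) * real ((k+p) choose k)
            * harmonic (n-k))
         = 1 / 2 ^ (2*n) * (real (p+1) / real (2*p+1))
            * real ((2*(n+p+1)) choose (n+p+1)) * real ((n+p+1) choose n)
            * (oddharm (n+p+1) - oddharm (p+1)))"
proof -
  have "(\<Sum>k=0..n. weight p k * harmonic (n-k))
      = 2 * (\<Sum>k=0..n. weight p k * mhn (n-k) 0 * (oddharm (k + p) - oddharm p))"
    by (simp add: harmonic_eq_mhn_1 sum_weight_mhn_Suc)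
  also have "\<dots> = real (p+1) / real (2*p + 1) * weight (p+1) n * (oddharm (n + p + 1) - oddharm (p + 1))"
    by (simp add: mhn_0 sum_weight_oddharm)
  finally show ?thesis
    using sum_weight_mhn_Suc[of p n m] by (simp add: weight_def mult_ac)
qed

end
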